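(* Let $F$ be a field and let $e_1,e_2,e_3\in M_n(F)$ be pairwise orthogonal idempotents (not necessarily nonzero) with $e_1+e_2+e_3=I_n$, of ranks $n_1,n_2,n_3$. Let $Z=\{a\in M_n(F): (e_1+e_2)ae_3=0,\ e_3a(e_1+e_2)=0\}$ (the centralizer of $e_1+e_2$ and $e_3$). Let $\sigma_1\ne\sigma_2\in F$ satisfy $k_1\sigma_1+k_2\sigma_2\ne0$ for all integer pairs $(k_1,k_2)\ne(0,0)$ with $0\le k_1\le n_1+n_2$, $0\le k_2\le n_3$, and set $\Lambda=\sigma_1(e_1+e_2)+\sigma_2e_3$. Then $$V=\big(Z\cap\Lambda^\perp\big)+e_1M_n(F)e_3+e_3M_n(F)e_2$$ is a Mathieu subspace of $M_n(F)$ of codimension $(n_1+n_2)n_3+1$.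
   Context: Let $\mathcal A$ be an associative algebra over a field $F$. An $F$-subspace $M\subseteq\mathcal A$ is a Mathieu subspace (MS) of $\mathcal A$ if for all $a,b,c\in\mathcal A$ such that $a^m\in M$ for all $m\ge 1$, there exists $N$ (depending on $a,b,c$) such that $ba^mc\in M$ for all $m\ge N$. $\Lambda^\perp=\{b\in M_n(F):\mathrm{Tr}(\Lambda b)=0\}$. *)

theory Defs
  imports "HOL-Analysis.Analysis"
begin

text \<open>Matrices in M_n(F) are modelled as 'a^'n^'n with 'a a field and 'n a finite
  index type (n = CARD('n)). The product is (**), the identity mat 1.\<close>

definition mscale :: "'a::field \<Rightarrow> 'a^'n^'n \<Rightarrow> 'a^'n^'n" where
  "mscale c A = (\<chi> i j. c * A $ i $ j)"

definition mpow :: "'a::field^'n^'n \<Rightarrow> nat \<Rightarrow> 'a^'n^'n" where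
  "mpow A m = ((\<lambda>X. X ** A) ^^ m) (mat 1)"

definition mathieu_subspace :: "('a::field^'n^'n) set \<Rightarrow> bool" where
  "mathieu_subspace M \<longleftrightarrow> module.subspace mscale M \<and>
     (\<forall>a b c. (\<forall>m\<ge>1. mpow a m \<in> M) \<longrightarrow> (\<exists>N. \<forall>m\<ge>N. b ** mpow a m ** c \<in> M))"

definition mat_codim :: "('a::field^'n^'n) set \<Rightarrow> nat" where
  "mat_codim V = vector_space.dim (mscale :: 'a \<Rightarrow> 'a^'n^'n \<Rightarrow> 'a^'n^'n) UNIV
                 - vector_space.dim (mscale :: 'a \<Rightarrow> 'a^'n^'n \<Rightarrow> 'a^'n^'n) V"

end

theory Submission
  imports Defs
begin

text \<open>Conjugating by a simultaneous diagonalisation of \<open>e1, e2, e3\<close> turns \<open>V\<close> into the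
  matrices that vanish on the index blocks \<open>I3 \<times> I1\<close> and \<open>I2 \<times> I3\<close> and satisfy one weighted
  trace condition, which gives the codimension.

  For the Mathieu property it suffices that \<open>V\<close> contains no nonzero idempotent: by Fitting's
  argument a matrix all of whose positive powers lie in such a subspace is nilpotent, so
  \<open>b a^m c = 0\<close> for large \<open>m\<close>. If \<open>p \<in> V\<close> is idempotent, so is \<open>e3 p e3\<close>, and with
  \<open>r = rank p = tr p\<close> and \<open>s = rank (e3 p e3)\<close> the condition \<open>tr (\<Lambda> p) = 0\<close> reads
  \<open>\<sigma>1 (r - s) + \<sigma>2 s = 0\<close>, where \<open>0 \<le> r - s \<le> n1 + n2\<close> and \<open>s \<le> n3\<close>. The genericity
  of \<open>\<sigma>1, \<sigma>2\<close> then forces \<open>r = 0\<close>.\<close>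

section \<open>The matrix algebra as a vector space\<close>

interpretation matvs: vector_space "mscale :: 'a::field \<Rightarrow> 'a^'n^'n \<Rightarrow> 'a^'n^'n"
  by unfold_locales (auto simp: mscale_def vec_eq_iff algebra_simps)

lemma mscale_component [simp]: "mscale c A $ i $ j = c * A $ i $ j"
  by (simp add: mscale_def)

lemma sum_matrix_component: "(\<Sum>x\<in>A. f x) $ i $ j = (\<Sum>x\<in>A. f x $ i $ j)"
  by (induct A rule: infinite_finite_induct) auto

definition matrix_unit :: "'n::finite \<times> 'n \<Rightarrow> 'a::field^'n^'n" where
  "matrix_unit p = (\<chi> k l. if k = fst p \<and> l = snd p then 1 else 0)"

lemma matrix_unit_component:
  "matrix_unit p $ k $ l = (if k = fst p \<and> l = snd p then 1 else 0)"
  by (simp add: matrix_unit_def)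

lemma inj_matrix_unit: "inj (matrix_unit :: 'n::finite \<times> 'n \<Rightarrow> 'a::field^'n^'n)"
  unfolding inj_def by (auto simp: matrix_unit_def vec_eq_iff split: if_splits)

lemma sum_matrix_units_component:
  fixes c :: "'n::finite \<times> 'n \<Rightarrow> 'a::field"
  assumes "finite A"
  shows "(\<Sum>p\<in>A. mscale (c p) (matrix_unit p)) $ i $ j = (if (i, j) \<in> A then c (i, j) else 0)"
proof -
  have "(\<Sum>p\<in>A. mscale (c p) (matrix_unit p)) $ i $ j = (\<Sum>p\<in>A. if p = (i, j) then c p else 0)"
    unfolding sum_matrix_component by (intro sum.cong) (auto simp: matrix_unit_component)
  with assms show ?thesis
    by (simp add: sum.delta)
qed

lemma independent_matrix_units:
  "matvs.independent (matrix_unit ` A :: ('a::field^'n^'n) set)"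
  unfolding matvs.independent_explicit_finite_subsets
proof (intro allI impI)
  fix B u
  assume B: "B \<subseteq> matrix_unit ` A" "(\<Sum>v\<in>B. mscale (u v) v) = (0::'a^'n^'n)"
  then obtain A' where A': "B = matrix_unit ` A'"
    by (meson subset_imageE)
  have "(\<Sum>p\<in>A'. mscale (u (matrix_unit p)) (matrix_unit p)) = (0::'a^'n^'n)"
    using B(2) unfolding A' by (subst (asm) sum.reindex) (auto intro: inj_on_subset[OF inj_matrix_unit])
  then have "u (matrix_unit p) = 0" if "p \<in> A'" for p
    using that sum_matrix_units_component[of A' "\<lambda>p. u (matrix_unit p)" "fst p" "snd p"]
    by (simp add: vec_eq_iff)
  then show "\<forall>v\<in>B. u v = 0"
    unfolding A' by blast
qed

lemma matrix_eq_sum_matrix_units: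
  "M = (\<Sum>p\<in>UNIV. mscale (M $ fst p $ snd p) (matrix_unit p))"
  using sum_matrix_units_component[of UNIV "\<lambda>p. M $ fst p $ snd p"] by (simp add: vec_eq_iff)

lemma span_matrix_units: "matvs.span (range matrix_unit) = (UNIV :: ('a::field^'n^'n) set)"
proof -
  have "M \<in> matvs.span (range matrix_unit)" for M :: "'a^'n^'n"
    by (subst matrix_eq_sum_matrix_units) (intro matvs.span_sum matvs.span_scale matvs.span_base; simp)
  then show ?thesis
    by auto
qed

interpretation matfd: finite_dimensional_vector_space
  "mscale :: 'a::field \<Rightarrow> 'a^'n^'n \<Rightarrow> 'a^'n^'n" "range matrix_unit"
  by unfold_locales (auto simp: independent_matrix_units span_matrix_units)

interpretation matpair: finite_dimensional_vector_space_pair_1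
  "mscale :: 'a::field \<Rightarrow> 'a^'n^'n \<Rightarrow> 'a^'n^'n" "range matrix_unit" "mscale :: 'a \<Rightarrow> 'a^'n^'n \<Rightarrow> 'a^'n^'n"
  by unfold_locales

lemma dim_matrix_space: "matvs.dim (UNIV :: ('a::field^'n^'n) set) = CARD('n) * CARD('n)"
proof -
  have "matvs.dim (UNIV :: ('a^'n^'n) set) = card (range (matrix_unit :: _ \<Rightarrow> 'a^'n^'n))"
    by (rule matfd.dim_UNIV)
  then show ?thesis
    by (simp add: card_image inj_matrix_unit)
qed

lemma matrix_mult_component: "(A ** B) $ i $ j = (\<Sum>k\<in>UNIV. A $ i $ k * B $ k $ j)"
  by (simp add: matrix_matrix_mult_def)

lemma matrix_add_rdistrib: "(A + B) ** (C::'a::field^'n^'n) = A ** C + B ** C"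
  by (simp add: vec_eq_iff matrix_mult_component distrib_right sum.distrib)

lemma matrix_diff_ldistrib: "(A::'a::field^'n^'n) ** (B - C) = A ** B - A ** C"
  by (simp add: vec_eq_iff matrix_mult_component right_diff_distrib sum_subtractf)

lemma matrix_diff_rdistrib: "(A - B) ** (C::'a::field^'n^'n) = A ** C - B ** C"
  by (simp add: vec_eq_iff matrix_mult_component left_diff_distrib sum_subtractf)

lemma matrix_mult_mscale_left: "mscale c A ** (B::'a::field^'n^'n) = mscale c (A ** B)"
  by (simp add: vec_eq_iff matrix_mult_component sum_distrib_left mult.assoc)

lemma matrix_mult_mscale_right: "(A::'a::field^'n^'n) ** mscale c B = mscale c (A ** B)"
  by (simp add: vec_eq_iff matrix_mult_component sum_distrib_left mult.left_commute)

lemma trace_zero [simp]: "trace (0::'a::semiring_1^'n^'n) = 0"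
  by (simp add: trace_def)

lemma trace_mscale: "trace (mscale c (A::'a::field^'n^'n)) = c * trace A"
  by (simp add: trace_def sum_distrib_left)

lemma linear_matrix_sandwich:
  "Vector_Spaces.linear mscale mscale (\<lambda>M. (S::'a::field^'n^'n) ** M ** T)"
  by unfold_locales
    (simp_all add: matrix_add_ldistrib matrix_add_rdistrib matrix_mult_mscale_left matrix_mult_mscale_right)

lemma subspace_matrix_sandwich_vimage:
  fixes S T :: "'a::field^'n^'n"
  shows "matvs.subspace W \<Longrightarrow> matvs.subspace {M. S ** M ** T \<in> W}"
  using matpair.linear_subspace_vimage[OF linear_matrix_sandwich, of W S T] by (simp add: vimage_def)

lemma linear_matrix_mult_left: "Vector_Spaces.linear mscale mscale (\<lambda>M. (A::'a::field^'n^'n) ** M)"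
  using linear_matrix_sandwich[of A "mat 1"] by simp

lemma subspace_matrix_mult_left_vimage:
  "matvs.subspace W \<Longrightarrow> matvs.subspace {M. (A::'a::field^'n^'n) ** M \<in> W}"
  using subspace_matrix_sandwich_vimage[of W A "mat 1"] by simp

lemma subspace_matrix_mult_right_vimage:
  "matvs.subspace W \<Longrightarrow> matvs.subspace {M. M ** (A::'a::field^'n^'n) \<in> W}"
  using subspace_matrix_sandwich_vimage[of W "mat 1" A] by simp

lemma subspace_commutant: "matvs.subspace {M :: 'a::field^'n^'n. M ** A = A ** M}"
  unfolding matvs.subspace_def
  by (simp add: matrix_add_rdistrib matrix_mult_mscale_left matrix_add_ldistrib matrix_mult_mscale_right)

section \<open>Row spaces and rank over an arbitrary field\<close>

definition row_space :: "'a::field^'n^'m \<Rightarrow> ('a^'n) set" where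
  "row_space M = range (\<lambda>x. x v* M)"

lemma vector_matrix_mult_scale: "(c *s x) v* (M::'a::field^'n^'m) = c *s (x v* M)"
  by (simp add: vec_eq_iff vector_matrix_mult_def sum_distrib_left mult.assoc)

lemma linear_vector_matrix_mult: "Vector_Spaces.linear (*s) (*s) (\<lambda>x. x v* (M::'a::field^'n^'m))"
  by unfold_locales (simp_all add: vector_matrix_left_distrib vector_matrix_mult_scale)

lemma subspace_row_space: "vec.subspace (row_space M)"
  unfolding row_space_def
  using vec.linear_subspace_image[OF linear_vector_matrix_mult vec.subspace_UNIV] .

lemma row_space_matrix_mult: "row_space (A ** B) = (\<lambda>y. y v* B) ` row_space A"
  unfolding row_space_def image_image by (simp add: vector_matrix_mul_assoc)

lemma rank_eq_dim_row_space: "rank M = vec.dim (row_space M)"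
proof -
  have "x v* M = (\<Sum>i\<in>UNIV. x $ i *s row i M)" for x
    by (simp add: vec_eq_iff vector_matrix_mult_def row_def sum_component)
  moreover have "(\<Sum>i\<in>UNIV. x $ i *s row i M) \<in> vec.span (rows M)" for x
    by (intro vec.span_sum vec.span_scale vec.span_base) (auto simp: rows_def)
  ultimately have "row_space M \<subseteq> vec.span (rows M)"
    unfolding row_space_def by auto
  moreover have "row i M = axis i 1 v* M" for i
    by (simp add: vec_eq_iff vector_matrix_mult_def row_def axis_def if_distrib if_distribR
        sum.delta cong: if_cong)
  then have "rows M \<subseteq> row_space M"
    unfolding row_space_def rows_def by auto
  ultimately have "vec.span (rows M) = vec.span (row_space M)"
    by (meson vec.span_eq vec.span_superset subset_trans)
  then show ?thesis
    unfolding row_rank_def_gen by (metis vec.dim_span)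
qed

lemma rank_matrix_mult_le_left: "rank ((A::'a::field^'n^'m) ** B) \<le> rank A"
  unfolding rank_eq_dim_row_space row_space_matrix_mult
  by (rule vec.dim_image_le[OF linear_vector_matrix_mult])

lemma rank_matrix_mult_le_right: "rank ((A::'a::field^'n^'m) ** B) \<le> rank B"
  unfolding rank_eq_dim_row_space row_space_matrix_mult
  by (rule vec.dim_subset) (unfold row_space_def, blast)

lemma rank_eq_0_imp_zero: "rank (M::'a::field^'n^'m) = 0 \<Longrightarrow> M = 0"
proof -
  assume "rank M = 0"
  then have "row_space M \<subseteq> {0}"
    by (simp add: rank_eq_dim_row_space)
  then have "axis i 1 v* M = 0" for i
    unfolding row_space_def by auto
  moreover have "axis i 1 v* M = M $ i" for i
    by (simp add: vec_eq_iff vector_matrix_mult_def axis_def if_distrib if_distribR sum.delta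
        cong: if_cong)
  ultimately show "M = 0"
    by (simp add: vec_eq_iff)
qed

lemma idempotent_fixes_row_space:
  "M ** M = M \<Longrightarrow> x \<in> row_space M \<Longrightarrow> x v* M = x"
  unfolding row_space_def by (auto simp: vector_matrix_mul_assoc)

lemma row_space_memI: "x v* M = x \<Longrightarrow> x \<in> row_space M"
  unfolding row_space_def by (rule range_eqI) (rule sym)

lemma vector_matrix_mult_sum_left: "(\<Sum>v\<in>S. f v) v* (M::'a::field^'n^'m) = (\<Sum>v\<in>S. f v v* M)"
  by (induct S rule: infinite_finite_induct) (auto simp: vector_matrix_left_distrib)

lemma vector_matrix_mult_sum_right: "x v* (\<Sum>k\<in>K. A k) = (\<Sum>k\<in>K. x v* (A k :: 'a::field^'n^'m))"
  by (induct K rule: infinite_finite_induct) (auto simp: vector_matrix_mult_add_rdistrib)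

section \<open>Simultaneous diagonalisation of orthogonal idempotents\<close>

definition diag_indicator :: "'n set \<Rightarrow> 'a::field^'n^'n" where
  "diag_indicator J = (\<chi> i j. if i = j \<and> i \<in> J then 1 else 0)"

lemma diag_indicator_component:
  "diag_indicator J $ i $ j = (if i = j \<and> i \<in> J then 1 else (0::'a::field))"
  by (simp add: diag_indicator_def)

lemma diag_indicator_mult_row:
  "(diag_indicator J ** A) $ i = (if i \<in> J then A $ i else (0::'a::field^'n))"
  by (simp add: vec_eq_iff matrix_matrix_mult_def diag_indicator_def if_distrib if_distribR
      sum.delta cong: if_cong)

lemma trace_diag_indicator: "trace (diag_indicator J :: 'a::field^'n^'n) = of_nat (card J)"
  by (simp add: trace_def diag_indicator_def sum.If_cases)

lemma row_space_orthogonal_idempotent: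
  assumes "e ** e = e" "e ** f = 0" "x \<in> row_space e"
  shows "x v* f = (0::'a::field^'n)"
proof -
  have "x v* f = (x v* e) v* f"
    using assms(1,3) by (simp add: idempotent_fixes_row_space)
  also have "\<dots> = 0"
    using assms(2) by (simp add: vector_matrix_mul_assoc)
  finally show ?thesis .
qed

lemma orthogonal_idempotents_row_space_bases:
  fixes e :: "'k \<Rightarrow> 'a::field^'n^'n"
  assumes "finite K"
    and idem: "\<And>k. k \<in> K \<Longrightarrow> e k ** e k = e k"
    and orth: "\<And>k l. k \<in> K \<Longrightarrow> l \<in> K \<Longrightarrow> k \<noteq> l \<Longrightarrow> e k ** e l = 0"
    and sum_id: "(\<Sum>k\<in>K. e k) = mat 1"
  obtains B where "\<And>k. B k \<subseteq> row_space (e k)" "\<And>k. card (B k) = rank (e k)"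
    "vec.independent (\<Union>k\<in>K. B k)" "vec.span (\<Union>k\<in>K. B k) = UNIV"
proof -
  have "\<forall>k. \<exists>B. B \<subseteq> row_space (e k) \<and> vec.independent B \<and> row_space (e k) \<subseteq> vec.span B
          \<and> card B = rank (e k)"
    unfolding rank_eq_dim_row_space by (metis vec.basis_exists)
  then obtain B where B: "\<And>k. B k \<subseteq> row_space (e k)" "\<And>k. vec.independent (B k)"
      "\<And>k. row_space (e k) \<subseteq> vec.span (B k)" "\<And>k. card (B k) = rank (e k)"
    by metis
  define BB where "BB = (\<Union>k\<in>K. B k)"
  have fixes_B: "x v* e k = x" if "x \<in> B k" "k \<in> K" for k x
    using that B(1) idem idempotent_fixes_row_space by blast
  have kills_B: "x v* e l = 0" if "x \<in> B k" "k \<in> K" "l \<in> K" "k \<noteq> l" for k l x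
    using that B(1) idem orth row_space_orthogonal_idempotent by blast
  have "finite BB"
    unfolding BB_def using \<open>finite K\<close> B(2) vec.finiteI_independent by blast
  have "vec.independent BB"
    unfolding vec.independent_explicit
  proof (intro conjI \<open>finite BB\<close> allI impI ballI)
    fix c v assume c: "(\<Sum>v\<in>BB. c v *s v) = 0" and "v \<in> BB"
    then obtain k where k: "k \<in> K" "v \<in> B k"
      unfolding BB_def by auto
    have proj: "(c w *s w) v* e k = (if w \<in> B k then c w *s w else 0)" if "w \<in> BB" for w
    proof -
      obtain l where "l \<in> K" "w \<in> B l"
        using \<open>w \<in> BB\<close> unfolding BB_def by auto
      show ?thesis
      proof (cases "l = k")
        case True
        then show ?thesis
          using fixes_B \<open>w \<in> B l\<close> k by (simp add: vector_matrix_mult_scale)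
      next
        case False
        then have "w v* e k = 0"
          using kills_B \<open>l \<in> K\<close> \<open>w \<in> B l\<close> k(1) by blast
        moreover have "w = 0" if "w \<in> B k"
          using fixes_B[OF that k(1)] \<open>w v* e k = 0\<close> by simp
        ultimately show ?thesis
          by (auto simp: vector_matrix_mult_scale)
      qed
    qed
    have "0 = (\<Sum>v\<in>BB. c v *s v) v* e k"
      using c by simp
    also have "\<dots> = (\<Sum>v\<in>BB. (c v *s v) v* e k)"
      by (rule vector_matrix_mult_sum_left)
    also have "\<dots> = (\<Sum>v\<in>B k. c v *s v)"
      using k \<open>finite BB\<close> proj by (simp add: sum.If_cases BB_def Int_absorb1 UN_upper)
    finally show "c v = 0"
      using B(2)[of k] k(2) vec.finiteI_independent unfolding vec.independent_explicit by metis
  qed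
  moreover have "x \<in> vec.span BB" for x
  proof -
    have "x = (\<Sum>k\<in>K. x v* e k)"
      using sum_id by (simp flip: vector_matrix_mult_sum_right)
    also have "\<dots> \<in> vec.span BB"
    proof (rule vec.span_sum)
      fix k assume "k \<in> K"
      have "x v* e k \<in> vec.span (B k)"
        using B(3)[of k] unfolding row_space_def by auto
      then show "x v* e k \<in> vec.span BB"
        using \<open>k \<in> K\<close> vec.span_mono[of "B k" BB] unfolding BB_def by auto
    qed
    finally show ?thesis .
  qed
  ultimately show ?thesis
    using that[of B] B(1,4) unfolding BB_def by auto
qed

lemma orthogonal_idempotents_simultaneously_diagonalizable:
  fixes e :: "'k \<Rightarrow> 'a::field^'n^'n"
  assumes "finite K"
    and idem: "\<And>k. k \<in> K \<Longrightarrow> e k ** e k = e k"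
    and orth: "\<And>k l. k \<in> K \<Longrightarrow> l \<in> K \<Longrightarrow> k \<noteq> l \<Longrightarrow> e k ** e l = 0"
    and sum_id: "(\<Sum>k\<in>K. e k) = mat 1"
  obtains S T :: "'a^'n^'n" and I :: "'k \<Rightarrow> 'n set"
  where "S ** T = mat 1" "T ** S = mat 1"
    "\<And>k. k \<in> K \<Longrightarrow> e k = T ** diag_indicator (I k) ** S"
    "\<And>k. k \<in> K \<Longrightarrow> card (I k) = rank (e k)"
    "\<And>k l. k \<in> K \<Longrightarrow> l \<in> K \<Longrightarrow> k \<noteq> l \<Longrightarrow> I k \<inter> I l = {}"
    "(\<Union>k\<in>K. I k) = UNIV"
proof -
  obtain B where B: "\<And>k. B k \<subseteq> row_space (e k)" "\<And>k. card (B k) = rank (e k)"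
    and indep: "vec.independent (\<Union>k\<in>K. B k)" and span: "vec.span (\<Union>k\<in>K. B k) = UNIV"
    using orthogonal_idempotents_row_space_bases[OF \<open>finite K\<close> idem orth sum_id] by blast
  define BB where "BB = (\<Union>k\<in>K. B k)"
  have fixes_B: "x v* e k = x" if "x \<in> B k" "k \<in> K" for k x
    using that B(1) idem idempotent_fixes_row_space by blast
  have kills_B: "x v* e l = 0" if "x \<in> B k" "k \<in> K" "l \<in> K" "k \<noteq> l" for k l x
    using that B(1) idem orth row_space_orthogonal_idempotent by blast
  have disjoint: "B k \<inter> B l = {}" if "k \<in> K" "l \<in> K" "k \<noteq> l" for k l
  proof -
    have "x = 0" if "x \<in> B k" "x \<in> B l" for x
      using fixes_B[of x l] kills_B[of x k l] that \<open>k \<in> K\<close> \<open>l \<in> K\<close> \<open>k \<noteq> l\<close> by simp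
    moreover have "0 \<notin> B k"
      using indep \<open>k \<in> K\<close> vec.dependent_zero by blast
    ultimately show ?thesis
      by blast
  qed
  have "finite BB" "card BB = CARD('n)"
    using vec.dim_eq_card[of BB UNIV] indep span vec.finiteI_independent
    unfolding BB_def by (auto simp: card_cart_basis)
  then obtain g where g: "bij_betw g (UNIV :: 'n set) BB"
    using finite_same_card_bij[of "UNIV :: 'n set" BB] by auto
  define I where "I k = g -` B k" for k
  define S :: "'a^'n^'n" where "S = (\<chi> i. g i)"
  have "rows S = BB"
    using g unfolding rows_def row_def S_def bij_betw_def by (auto simp: vec_lambda_eta)
  then obtain T :: "'a^'n^'n" where TS: "T ** S = mat 1"
    using matrix_left_invertible_span_rows_gen[of S] span unfolding BB_def by auto
  then have ST: "S ** T = mat 1"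
    using matrix_left_right_inverse by blast
  have S_e: "S ** e k = diag_indicator (I k) ** S" if "k \<in> K" for k
  proof -
    have "(S ** e k) $ i = (diag_indicator (I k) ** S) $ i" for i
    proof -
      obtain l where l: "l \<in> K" "g i \<in> B l"
        using g bij_betwE unfolding BB_def by blast
      have "(S ** e k) $ i = g i v* e k"
        by (simp add: S_def vec_eq_iff matrix_matrix_mult_def vector_matrix_mult_def)
      moreover have "(diag_indicator (I k) ** S) $ i = (if i \<in> I k then g i else 0)"
        by (simp add: diag_indicator_mult_row S_def)
      ultimately show ?thesis
        using fixes_B kills_B disjoint[OF l(1) \<open>k \<in> K\<close>] l \<open>k \<in> K\<close>
        by (cases "l = k") (auto simp: I_def)
    qed
    then show ?thesis
      by (simp add: vec_eq_iff)
  qed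
  show ?thesis
  proof (rule that[OF ST TS])
    fix k assume "k \<in> K"
    have "T ** diag_indicator (I k) ** S = T ** (S ** e k)"
      by (simp add: S_e[OF \<open>k \<in> K\<close>] matrix_mul_assoc)
    then show "e k = T ** diag_indicator (I k) ** S"
      by (simp add: matrix_mul_assoc TS)
    have "B k \<subseteq> range g" "inj g"
      using g \<open>k \<in> K\<close> unfolding bij_betw_def BB_def by auto
    then show "card (I k) = rank (e k)"
      unfolding I_def by (simp add: card_vimage_inj B(2))
  next
    show "I k \<inter> I l = {}" if "k \<in> K" "l \<in> K" "k \<noteq> l" for k l
      using disjoint[OF that] unfolding I_def by auto
    have "g i \<in> BB" for i
      using g bij_betwE by blast
    then show "(\<Union>k\<in>K. I k) = UNIV"
      unfolding I_def BB_def by blast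
  qed
qed

text \<open>Proof: diagonalise the complete pair \<open>M, 1 - M\<close>.\<close>

lemma trace_idempotent:
  fixes M :: "'a::field^'n^'n"
  assumes "M ** M = M"
  shows "trace M = of_nat (rank M)"
proof -
  define e where "e b = (if b then M else mat 1 - M)" for b
  have idem: "e k ** e k = e k" for k
    using assms by (cases k) (simp_all add: e_def matrix_diff_ldistrib matrix_diff_rdistrib)
  have orth: "e k ** e l = 0" if "k \<noteq> l" for k l
    using assms that by (cases k) (simp_all add: e_def matrix_diff_ldistrib matrix_diff_rdistrib)
  have sum_id: "(\<Sum>k\<in>UNIV. e k) = mat 1"
    by (simp add: UNIV_bool e_def)
  have "\<exists>S T :: 'a^'n^'n. \<exists>I. S ** T = mat 1 \<and> T ** S = mat 1
          \<and> M = T ** (diag_indicator (I True) ** S) \<and> card (I True) = rank M"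
  proof (rule orthogonal_idempotents_simultaneously_diagonalizable[of UNIV e])
    fix S T :: "'a^'n^'n" and I :: "bool \<Rightarrow> 'n set"
    assume "S ** T = mat 1" "T ** S = mat 1" "\<And>k. k \<in> UNIV \<Longrightarrow> e k = T ** diag_indicator (I k) ** S"
      "\<And>k. k \<in> UNIV \<Longrightarrow> card (I k) = rank (e k)"
    then show ?thesis
      by (metis UNIV_I e_def matrix_mul_assoc)
  qed (use idem orth sum_id in auto)
  then obtain S T :: "'a^'n^'n" and I where ST: "S ** T = mat 1" "T ** S = mat 1"
    and M: "M = T ** (diag_indicator (I True) ** S)" and "card (I True) = rank M"
    by blast
  have "trace M = trace ((diag_indicator (I True) ** S) ** T)"
    unfolding M by (rule trace_mul_sym)
  also have "\<dots> = of_nat (rank M)"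
    using ST \<open>card (I True) = rank M\<close> by (simp flip: matrix_mul_assoc add: trace_diag_indicator)
  finally show ?thesis .
qed

section \<open>Powers of a matrix and idempotent-free subspaces\<close>

lemma mpow_0 [simp]: "mpow A 0 = mat 1"
  by (simp add: mpow_def)

lemma mpow_Suc: "mpow A (Suc m) = mpow A m ** A"
  by (simp add: mpow_def)

lemma mpow_1 [simp]: "mpow A (Suc 0) = A"
  by (simp add: mpow_def)

lemma mpow_add: "mpow (A::'a::field^'n^'n) (m + k) = mpow A m ** mpow A k"
  by (induct k) (simp_all add: mpow_Suc matrix_mul_assoc)

lemma mpow_Suc': "mpow (A::'a::field^'n^'n) (Suc m) = A ** mpow A m"
  using mpow_add[of A 1 m] by simp

lemma mpow_commute: "(A::'a::field^'n^'n) ** B = B ** A \<Longrightarrow> mpow A m ** B = B ** mpow A m"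
  by (induct m) (simp_all add: mpow_Suc flip: matrix_mul_assoc, simp add: matrix_mul_assoc)

lemma mpow_mult_commute:
  assumes "(A::'a::field^'n^'n) ** B = B ** A"
  shows "mpow (A ** B) m = mpow A m ** mpow B m"
proof (induct m)
  case (Suc m)
  have "mpow (A ** B) (Suc m) = mpow A m ** (mpow B m ** A) ** B"
    using Suc by (simp add: mpow_Suc matrix_mul_assoc)
  also have "\<dots> = mpow A (Suc m) ** mpow B (Suc m)"
    using mpow_commute[OF assms[symmetric]] by (simp add: mpow_Suc matrix_mul_assoc)
  finally show ?case .
qed simp

definition powers_span :: "'a::field^'n^'n \<Rightarrow> ('a^'n^'n) set" where
  "powers_span a = matvs.span (range (mpow a))"

lemma subspace_powers_span: "matvs.subspace (powers_span a)"
  unfolding powers_span_def by (rule matvs.subspace_span)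

lemma powers_span_induct [consumes 1, case_names subspace mpow]:
  assumes "x \<in> powers_span a" "matvs.subspace {x. P x}" "\<And>m. P (mpow a m)"
  shows "P x"
  using assms matvs.span_minimal[of "range (mpow a)" "{x. P x}"] unfolding powers_span_def by blast

lemma mpow_in_powers_span: "mpow a m \<in> powers_span a"
  unfolding powers_span_def by (rule matvs.span_base) simp

lemma mpow_mult_in_powers_span: "y \<in> powers_span a \<Longrightarrow> mpow a m ** y \<in> powers_span a"
proof (induct rule: powers_span_induct)
  case subspace
  show ?case
    by (rule subspace_matrix_mult_left_vimage[OF subspace_powers_span])
qed (simp add: mpow_in_powers_span flip: mpow_add)

lemma powers_span_mult:
  assumes "x \<in> powers_span a" "y \<in> powers_span a"
  shows "x ** y \<in> powers_span a"
  using assms(1)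
proof (induct rule: powers_span_induct)
  case subspace
  show ?case
    by (rule subspace_matrix_mult_right_vimage[OF subspace_powers_span])
qed (rule mpow_mult_in_powers_span[OF assms(2)])

lemma powers_span_commute_mpow: "y \<in> powers_span a \<Longrightarrow> y ** mpow a m = mpow a m ** y"
proof (induct rule: powers_span_induct)
  case subspace
  show ?case
    by (rule subspace_commutant)
qed (simp flip: mpow_add add: add.commute)

lemma powers_span_commute:
  assumes "x \<in> powers_span a" "y \<in> powers_span a"
  shows "x ** y = y ** x"
  using assms(1)
proof (induct rule: powers_span_induct)
  case subspace
  show ?case
    by (rule subspace_commutant)
qed (simp add: powers_span_commute_mpow[OF assms(2)])

lemma mpow_in_powers_span_of: "x \<in> powers_span a \<Longrightarrow> mpow x m \<in> powers_span a"
  by (induct m) (auto simp: mpow_Suc powers_span_mult intro: mpow_in_powers_span[of a 0, simplified])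

lemma mult_powers_span_in_subspace:
  assumes "matvs.subspace W" "\<forall>m\<ge>1. mpow a m \<in> W" "x \<in> powers_span a"
  shows "a ** x \<in> W"
  using assms(3)
proof (induct rule: powers_span_induct)
  case subspace
  then show ?case
    using subspace_matrix_mult_left_vimage[OF assms(1)] by simp
next
  case (mpow m)
  then show ?case
    using assms(2) by (simp flip: mpow_Suc')
qed

text \<open>The spans of the tails \<open>{a^j, a^(j+1), ...}\<close> form a decreasing chain of subspaces, which
  must become stationary.\<close>

lemma mpow_in_span_higher_mpows: "\<exists>k. mpow (a::'a::field^'n^'n) k \<in> matvs.span (mpow a ` {Suc k..})"
proof -
  define d where "d j = matvs.dim (mpow a ` {j..})" for j
  have "\<exists>j. d j \<le> d (Suc j)"
  proof (rule ccontr)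
    assume "\<not> ?thesis"
    then have decreasing: "d (Suc j) < d j" for j
      by (simp add: not_le)
    have "d j + j \<le> d 0" for j
    proof (induct j)
      case (Suc j)
      then show ?case
        using decreasing[of j] by linarith
    qed simp
    from this[of "Suc (d 0)"] show False
      by simp
  qed
  then obtain k where "d k \<le> d (Suc k)" ..
  then have "matvs.span (mpow a ` {Suc k..}) = matvs.span (mpow a ` {k..})"
    unfolding d_def by (intro matfd.dim_eq_span) auto
  moreover have "mpow a k \<in> matvs.span (mpow a ` {k..})"
    by (rule matvs.span_base) simp
  ultimately show ?thesis
    by auto
qed

lemma mpow_eq_mpow_mult_powers_span:
  "\<exists>k R. R \<in> powers_span a \<and> mpow a k = mpow a k ** ((a::'a::field^'n^'n) ** R)"
proof -
  obtain k where k: "mpow a k \<in> matvs.span (mpow a ` {Suc k..})"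
    using mpow_in_span_higher_mpows by blast
  have "mpow a ` {Suc k..} = (\<lambda>x. mpow a (Suc k) ** x) ` range (mpow a)"
  proof
    show "mpow a ` {Suc k..} \<subseteq> (\<lambda>x. mpow a (Suc k) ** x) ` range (mpow a)"
    proof
      fix x assume "x \<in> mpow a ` {Suc k..}"
      then obtain j where "Suc k \<le> j" "x = mpow a j"
        by auto
      then have "x = mpow a (Suc k) ** mpow a (j - Suc k)"
        by (simp flip: mpow_add)
      then show "x \<in> (\<lambda>x. mpow a (Suc k) ** x) ` range (mpow a)"
        by blast
    qed
  qed (auto simp flip: mpow_add intro!: imageI)
  then have "matvs.span (mpow a ` {Suc k..}) = (\<lambda>x. mpow a (Suc k) ** x) ` powers_span a"
    unfolding powers_span_def by (simp add: matpair.linear_span_image[OF linear_matrix_mult_left])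
  then obtain R where "R \<in> powers_span a" "mpow a k = mpow a (Suc k) ** R"
    using k by auto
  then show ?thesis
    by (auto simp: mpow_Suc matrix_mul_assoc)
qed

text \<open>Fitting's argument: from \<open>a^k = a^k Y\<close> with \<open>Y = a R\<close> a polynomial in \<open>a\<close>, the power
  \<open>Y^(k+1)\<close> is an idempotent lying in the span of the positive powers of \<open>a\<close>.\<close>

lemma nilpotent_if_powers_in_idempotent_free_subspace:
  assumes W: "matvs.subspace W" and powers: "\<forall>m\<ge>1. mpow a m \<in> W"
    and idempotent_free: "\<And>p. p \<in> W \<Longrightarrow> p ** p = p \<Longrightarrow> p = 0"
  shows "\<exists>N. mpow (a::'a::field^'n^'n) N = 0"
proof -
  obtain k R where R: "R \<in> powers_span a" and a_k: "mpow a k = mpow a k ** (a ** R)"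
    using mpow_eq_mpow_mult_powers_span by blast
  define Y where "Y = a ** R"
  have a_in: "a \<in> powers_span a"
    using mpow_in_powers_span[of a 1] by simp
  have "Y \<in> powers_span a"
    unfolding Y_def using a_in R by (rule powers_span_mult)
  have Y_k: "mpow Y k = mpow a k ** mpow R k"
    unfolding Y_def by (rule mpow_mult_commute) (rule powers_span_commute[OF a_in R])
  have R_k: "mpow R k ** mpow a k = mpow a k ** mpow R k"
    using powers_span_commute[OF mpow_in_powers_span_of[OF R] mpow_in_powers_span] by simp
  have a_k_Y: "mpow a k ** Y = mpow a k"
    using a_k by (simp add: Y_def)
  have Y_Suc_k: "mpow Y (Suc k) = mpow Y k"
  proof -
    have "mpow Y (Suc k) = mpow R k ** (mpow a k ** Y)"
      by (simp only: mpow_Suc Y_k R_k[symmetric] matrix_mul_assoc)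
    also have "\<dots> = mpow Y k"
      by (simp add: a_k_Y R_k Y_k)
    finally show ?thesis .
  qed
  then have Y_stable: "mpow Y (k + j) = mpow Y k" for j
    by (induct j) (simp_all add: mpow_Suc)
  define p where "p = mpow Y (Suc k)"
  have "p ** p = mpow Y (Suc k + Suc k)"
    unfolding p_def by (rule mpow_add[symmetric])
  also have "\<dots> = p"
    using Y_stable[of "Suc (Suc k)"] Y_Suc_k unfolding p_def by simp
  finally have "p ** p = p" .
  moreover have "p \<in> W"
  proof -
    have "p = a ** (R ** mpow Y k)"
      by (simp add: p_def mpow_Suc' Y_def matrix_mul_assoc)
    moreover have "R ** mpow Y k \<in> powers_span a"
      using R mpow_in_powers_span_of[OF \<open>Y \<in> powers_span a\<close>] by (rule powers_span_mult)
    ultimately show ?thesis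
      using mult_powers_span_in_subspace[OF W powers] by simp
  qed
  ultimately have "mpow Y k = 0"
    using idempotent_free Y_Suc_k unfolding p_def by simp
  moreover have "mpow a k ** mpow Y j = mpow a k" for j
    by (induct j) (simp_all add: mpow_Suc matrix_mul_assoc a_k_Y)
  ultimately show ?thesis
    by (metis times0_right)
qed

lemma mathieu_subspace_if_idempotent_free:
  assumes W: "matvs.subspace W"
    and idempotent_free: "\<And>p. p \<in> W \<Longrightarrow> p ** p = p \<Longrightarrow> p = (0::'a::field^'n^'n)"
  shows "mathieu_subspace W"
  unfolding mathieu_subspace_def
proof (intro conjI allI impI W)
  fix a b c :: "'a^'n^'n"
  assume "\<forall>m\<ge>1. mpow a m \<in> W"
  then obtain N where N: "mpow a N = 0"
    using nilpotent_if_powers_in_idempotent_free_subspace[OF W] idempotent_free by blast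
  have "b ** mpow a m ** c \<in> W" if "m \<ge> N" for m
  proof -
    have "mpow a m = mpow a N ** mpow a (m - N)"
      using that by (simp flip: mpow_add)
    then show ?thesis
      using N W by (simp add: matvs.subspace_0)
  qed
  then show "\<exists>N. \<forall>m\<ge>N. b ** mpow a m ** c \<in> W"
    by blast
qed

section \<open>Idempotents in a corner\<close>

lemma corner_idempotent:
  fixes p e :: "'a::field^'n^'n"
  assumes "p ** p = p" "e ** e = e" "e ** p ** (mat 1 - e) ** p ** e = 0"
  shows "(e ** p ** e) ** (e ** p ** e) = e ** p ** e"
proof -
  have "X ** e ** e = X ** e" for X :: "'a^'n^'n"
    using assms(2) by (simp flip: matrix_mul_assoc)
  then have "(e ** p ** e) ** (e ** p ** e) = e ** p ** e ** p ** e"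
    by (simp add: matrix_mul_assoc)
  also have "\<dots> = e ** p ** p ** e - e ** p ** (mat 1 - e) ** p ** e"
    by (simp add: matrix_diff_ldistrib matrix_diff_rdistrib matrix_mul_assoc)
  also have "\<dots> = e ** p ** e"
    using assms(1,3) by (simp flip: matrix_mul_assoc)
  finally show ?thesis .
qed

lemma rank_corner_le: "rank ((e::'a::field^'n^'n) ** p ** e) \<le> min (rank p) (rank e)"
  using rank_matrix_mult_le_right[of e p] rank_matrix_mult_le_left[of "e ** p" e]
    rank_matrix_mult_le_left[of e "p ** e"]
  by (simp add: matrix_mul_assoc)

text \<open>Row vectors fixed by both \<open>p\<close> and \<open>e\<close> are fixed by \<open>e p e\<close>; the dimension formula for
  the sum of the two row spaces gives the bound.\<close>

lemma rank_add_le_card_add_rank_corner: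
  fixes p e :: "'a::field^'n^'n"
  assumes "p ** p = p" "e ** e = e"
  shows "rank p + rank e \<le> CARD('n) + rank (e ** p ** e)"
proof -
  have "row_space p \<inter> row_space e \<subseteq> row_space (e ** p ** e)"
  proof
    fix x assume "x \<in> row_space p \<inter> row_space e"
    then have "x v* p = x" "x v* e = x"
      using assms idempotent_fixes_row_space by blast+
    then show "x \<in> row_space (e ** p ** e)"
      by (intro row_space_memI) (simp flip: vector_matrix_mul_assoc)
  qed
  then have "vec.dim (row_space p \<inter> row_space e) \<le> rank (e ** p ** e)"
    unfolding rank_eq_dim_row_space by (rule vec.dim_subset)
  moreover have "vec.dim {x + y |x y. x \<in> row_space p \<and> y \<in> row_space e}
      + vec.dim (row_space p \<inter> row_space e) = rank p + rank e"
    unfolding rank_eq_dim_row_space by (rule vec.dim_sums_Int[OF subspace_row_space subspace_row_space])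
  moreover have "vec.dim {x + y |x y. x \<in> row_space p \<and> y \<in> row_space e} \<le> CARD('n)"
    using vec.dim_subset[OF subset_UNIV] by (simp add: card_cart_basis)
  ultimately show ?thesis
    by linarith
qed

section \<open>The subspace \<open>V\<close>\<close>

locale idempotent_triple =
  fixes e1 e2 e3 :: "'a::field^'n^'n" and \<sigma>1 \<sigma>2 :: 'a
  assumes idem: "e1 ** e1 = e1" "e2 ** e2 = e2" "e3 ** e3 = e3"
    and orth: "e1 ** e2 = 0" "e2 ** e1 = 0" "e1 ** e3 = 0" "e3 ** e1 = 0"
              "e2 ** e3 = 0" "e3 ** e2 = 0"
    and sum_id: "e1 + e2 + e3 = mat 1"
    and sigma_gen: "\<forall>k1 k2 :: int. (k1, k2) \<noteq> (0, 0) \<and> 0 \<le> k1 \<and> k1 \<le> int (rank e1 + rank e2)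
                      \<and> 0 \<le> k2 \<and> k2 \<le> int (rank e3) \<longrightarrow> of_int k1 * \<sigma>1 + of_int k2 * \<sigma>2 \<noteq> 0"
begin

definition Lambda :: "'a^'n^'n" where
  "Lambda = mscale \<sigma>1 (e1 + e2) + mscale \<sigma>2 e3"

text \<open>In the block decomposition along \<open>e1, e2, e3\<close>, the subspace of the theorem consists of the
  \<open>Lambda\<close>-traceless matrices whose \<open>(3,1)\<close> and \<open>(2,3)\<close> blocks vanish.\<close>

definition V :: "('a^'n^'n) set" where
  "V = {v. e3 ** v ** e1 = 0 \<and> e2 ** v ** e3 = 0 \<and> trace (Lambda ** v) = 0}"

lemma idempotent_products:
  "X ** e1 ** e1 = X ** e1" "X ** e2 ** e2 = X ** e2" "X ** e3 ** e3 = X ** e3"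
  "X ** e1 ** e2 = 0" "X ** e2 ** e1 = 0" "X ** e1 ** e3 = 0" "X ** e3 ** e1 = 0"
  "X ** e2 ** e3 = 0" "X ** e3 ** e2 = 0"
  using orth idem by (simp_all flip: matrix_mul_assoc)

lemmas block_simps = idempotent_products orth idem matrix_mul_assoc matrix_add_rdistrib
  matrix_add_ldistrib

lemma simultaneous_diagonalization:
  obtains S T :: "'a^'n^'n" and I1 I2 I3 where "S ** T = mat 1" "T ** S = mat 1"
    "e1 = T ** diag_indicator I1 ** S" "e2 = T ** diag_indicator I2 ** S"
    "e3 = T ** diag_indicator I3 ** S"
    "card I1 = rank e1" "card I2 = rank e2" "card I3 = rank e3"
    "I1 \<inter> I2 = {}" "I1 \<inter> I3 = {}" "I2 \<inter> I3 = {}" "I1 \<union> I2 \<union> I3 = UNIV"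
proof -
  define e where "e k = (if k = (1::nat) then e1 else if k = 2 then e2 else e3)" for k
  have "\<exists>S T :: 'a^'n^'n. \<exists>I. S ** T = mat 1 \<and> T ** S = mat 1
      \<and> (\<forall>k\<in>{1,2,3}. e k = T ** diag_indicator (I k) ** S \<and> card (I k) = rank (e k))
      \<and> (\<forall>k\<in>{1,2,3}. \<forall>l\<in>{1,2,3}. k \<noteq> l \<longrightarrow> I k \<inter> I l = {}) \<and> (\<Union>k\<in>{1,2,3}. I k) = UNIV"
  proof (rule orthogonal_idempotents_simultaneously_diagonalizable[of "{1,2,3}" e])
    fix S T :: "'a^'n^'n" and I
    assume "S ** T = mat 1" "T ** S = mat 1"
      "\<And>k. k \<in> {1,2,3} \<Longrightarrow> e k = T ** diag_indicator (I k) ** S"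
      "\<And>k. k \<in> {1,2,3} \<Longrightarrow> card (I k) = rank (e k)"
      "\<And>k l. k \<in> {1,2,3} \<Longrightarrow> l \<in> {1,2,3} \<Longrightarrow> k \<noteq> l \<Longrightarrow> I k \<inter> I l = {}"
      "(\<Union>k\<in>{1,2,3}. I k) = UNIV"
    then show ?thesis
      by blast
  qed (use idem orth sum_id in \<open>auto simp: e_def add.assoc\<close>)
  then obtain S T :: "'a^'n^'n" and I where "S ** T = mat 1" "T ** S = mat 1"
    "\<forall>k\<in>{1,2,3}. e k = T ** diag_indicator (I k) ** S \<and> card (I k) = rank (e k)"
    "\<forall>k\<in>{1,2,3}. \<forall>l\<in>{1,2,3}. k \<noteq> l \<longrightarrow> I k \<inter> I l = {}" "(\<Union>k\<in>{1,2,3}. I k) = UNIV"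
    by blast
  then show ?thesis
    by (intro that[of S T "I 1" "I 2" "I 3"]) (auto simp: e_def)
qed

lemma rank_sum: "rank e1 + rank e2 + rank e3 = CARD('n)"
proof -
  obtain I1 I2 I3 :: "'n set"
    where "card I1 = rank e1" "card I2 = rank e2" "card I3 = rank e3"
      "I1 \<inter> I2 = {}" "I1 \<inter> I3 = {}" "I2 \<inter> I3 = {}" "I1 \<union> I2 \<union> I3 = UNIV"
    by (rule simultaneous_diagonalization) blast
  then show ?thesis
    by (metis card_Un_disjoint finite Int_Un_distrib2 Un_empty)
qed

lemma trace_Lambda_mult: "trace (Lambda ** v) = \<sigma>1 * trace ((e1 + e2) ** v) + \<sigma>2 * trace (e3 ** v)"
  unfolding Lambda_def by (simp only: matrix_add_rdistrib matrix_mult_mscale_left trace_add trace_mscale)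

lemma Lambda_mult_idempotents:
  "Lambda ** e1 = mscale \<sigma>1 e1" "Lambda ** e2 = mscale \<sigma>1 e2" "Lambda ** e3 = mscale \<sigma>2 e3"
  unfolding Lambda_def by (simp_all add: matrix_add_rdistrib matrix_mult_mscale_left orth idem)

lemma trace_Lambda_off_diagonal:
  "trace (Lambda ** (e1 ** m ** e3)) = 0" "trace (Lambda ** (e3 ** m ** e2)) = 0"
proof -
  have "trace (e1 ** m ** e3) = 0" "trace (e3 ** m ** e2) = 0"
    using trace_mul_sym[of "e1 ** m" e3] trace_mul_sym[of "e3 ** m" e2]
    by (simp_all add: matrix_mul_assoc orth)
  then show "trace (Lambda ** (e1 ** m ** e3)) = 0" "trace (Lambda ** (e3 ** m ** e2)) = 0"
    by (simp_all add: matrix_mul_assoc Lambda_mult_idempotents matrix_mult_mscale_left trace_mscale)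
qed

lemma sum_decomposition_eq_V:
  "{z + x + y | z x y. z \<in> {a. (e1 + e2) ** a ** e3 = 0 \<and> e3 ** a ** (e1 + e2) = 0}
      \<inter> {b. trace (Lambda ** b) = 0} \<and> x \<in> {e1 ** m ** e3 | m. True} \<and> y \<in> {e3 ** m ** e2 | m. True}}
    = V" (is "?U = V")
proof (intro set_eqI iffI)
  fix v assume "v \<in> ?U"
  then obtain z m1 m2 where v: "v = z + e1 ** m1 ** e3 + e3 ** m2 ** e2"
    and z: "(e1 + e2) ** z ** e3 = 0" "e3 ** z ** (e1 + e2) = 0" "trace (Lambda ** z) = 0"
    by blast
  have "e3 ** z ** e1 = e3 ** z ** (e1 + e2) ** e1" "e2 ** z ** e3 = e2 ** ((e1 + e2) ** z ** e3)"
    by (simp_all add: block_simps)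
  then have "e3 ** z ** e1 = 0" "e2 ** z ** e3 = 0"
    using z by simp_all
  then have "e3 ** v ** e1 = 0" "e2 ** v ** e3 = 0"
    unfolding v by (simp_all add: block_simps)
  moreover have "trace (Lambda ** v) = trace (Lambda ** z) + trace (Lambda ** (e1 ** m1 ** e3))
      + trace (Lambda ** (e3 ** m2 ** e2))"
    unfolding v by (simp only: matrix_add_ldistrib trace_add)
  ultimately show "v \<in> V"
    using z(3) unfolding V_def by (simp add: trace_Lambda_off_diagonal)
next
  fix v assume "v \<in> V"
  then have v: "e3 ** v ** e1 = 0" "e2 ** v ** e3 = 0" "trace (Lambda ** v) = 0"
    unfolding V_def by auto
  define z where "z = (e1 + e2) ** v ** (e1 + e2) + e3 ** v ** e3"
  have "v = (e1 + e2 + e3) ** v ** (e1 + e2 + e3)"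
    using sum_id by simp
  also have "\<dots> = z + e1 ** v ** e3 + e3 ** v ** e2"
    using v(1,2) \<open>e2 ** v ** e3 = 0\<close>[THEN arg_cong[where f = "\<lambda>x. e2 ** x"]]
    unfolding z_def by (simp add: block_simps add_ac)
  finally have v_eq: "v = z + e1 ** v ** e3 + e3 ** v ** e2" .
  have "(e1 + e2) ** z ** e3 = 0" "e3 ** z ** (e1 + e2) = 0"
    unfolding z_def by (simp_all add: block_simps)
  moreover have "trace (Lambda ** z) = 0"
    using v(3) v_eq trace_Lambda_off_diagonal[of v]
    by (metis add.right_neutral matrix_add_ldistrib trace_add)
  ultimately show "v \<in> ?U"
    using v_eq by blast
qed

lemma subspace_V: "matvs.subspace V"
  unfolding matvs.subspace_def V_def
  by (simp add: matrix_add_ldistrib matrix_add_rdistrib matrix_mult_mscale_left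
      matrix_mult_mscale_right trace_add trace_mscale)

lemma idempotent_in_V_eq_0:
  assumes "p \<in> V" "p ** p = p"
  shows "p = 0"
proof -
  have p: "e3 ** p ** e1 = 0" "e2 ** p ** e3 = 0" "trace (Lambda ** p) = 0"
    using assms(1) unfolding V_def by auto
  define D where "D = e3 ** p ** e3"
  have "mat 1 - e3 = e1 + e2"
    by (simp flip: sum_id)
  then have "e3 ** p ** (mat 1 - e3) ** p ** e3 = (e3 ** p ** e1) ** p ** e3 + (e3 ** p) ** (e2 ** p ** e3)"
    by (simp add: matrix_add_ldistrib matrix_add_rdistrib matrix_mul_assoc)
  then have "D ** D = D"
    unfolding D_def using corner_idempotent[OF assms(2) idem(3)] p by simp
  define r s where "r = rank p" and "s = rank D"
  have "trace (e3 ** p) = trace D"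
    using trace_mul_sym[of e3 "e3 ** p"] unfolding D_def by (simp add: block_simps)
  moreover have "trace ((e1 + e2) ** p) = trace p - trace (e3 ** p)"
    using \<open>mat 1 - e3 = e1 + e2\<close> by (metis matrix_diff_rdistrib matrix_mul_lid trace_sub)
  ultimately have "\<sigma>1 * (of_nat r - of_nat s) + \<sigma>2 * of_nat s = 0"
    using p(3) trace_idempotent[OF assms(2)] trace_idempotent[OF \<open>D ** D = D\<close>]
    unfolding trace_Lambda_mult r_def s_def by simp
  moreover have "s \<le> r" "s \<le> rank e3"
    using rank_corner_le[of e3 p] unfolding r_def s_def D_def by simp_all
  moreover have "r + rank e3 \<le> CARD('n) + s"
    using rank_add_le_card_add_rank_corner[OF assms(2) idem(3)] unfolding r_def s_def D_def .
  ultimately have "r = 0"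
    using sigma_gen[rule_format, of "int r - int s" "int s"] rank_sum
    by (auto simp: of_nat_diff algebra_simps)
  then show "p = 0"
    unfolding r_def by (rule rank_eq_0_imp_zero)
qed

lemma mathieu_subspace_V: "mathieu_subspace V"
  using subspace_V idempotent_in_V_eq_0 by (rule mathieu_subspace_if_idempotent_free)

end

section \<open>The codimension of \<open>V\<close>\<close>

lemma diag_indicator_sandwich_component:
  "(diag_indicator A ** w ** diag_indicator B) $ i $ j = (if i \<in> A \<and> j \<in> B then w $ i $ j else (0::'a::field))"
proof -
  have "(diag_indicator A ** w ** diag_indicator B) $ i $ j
      = (\<Sum>k\<in>UNIV. if k = j then (diag_indicator A ** w) $ i $ j * (if j \<in> B then 1 else 0) else 0)"
    unfolding matrix_mult_component[of "diag_indicator A ** w"]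
    by (rule sum.cong) (auto simp: diag_indicator_component)
  then show ?thesis
    by (simp add: diag_indicator_mult_row)
qed

lemma diag_indicator_sandwich_eq_0:
  "diag_indicator A ** w ** diag_indicator B = 0 \<longleftrightarrow> (\<forall>i\<in>A. \<forall>j\<in>B. w $ i $ j = (0::'a::field))"
  by (auto simp: vec_eq_iff diag_indicator_sandwich_component)

lemma trace_diagonal_mult:
  assumes "\<And>i j. i \<noteq> j \<Longrightarrow> X $ i $ j = 0"
  shows "trace (X ** w) = (\<Sum>i\<in>UNIV. X $ i $ i * w $ i $ i :: 'a::field)"
proof -
  have "(X ** w) $ i $ i = (\<Sum>k\<in>UNIV. if k = i then X $ i $ i * w $ i $ i else 0)" for i
    unfolding matrix_mult_component by (rule sum.cong) (auto simp: assms)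
  then show ?thesis
    unfolding trace_def by simp
qed

lemma span_matrix_units_component:
  assumes "w \<in> matvs.span (matrix_unit ` A :: ('a::field^'n^'n) set)" "(i, j) \<notin> A"
  shows "w $ i $ j = 0"
proof -
  have "matvs.span (matrix_unit ` A) \<subseteq> {w :: 'a^'n^'n. \<forall>p. p \<notin> A \<longrightarrow> w $ fst p $ snd p = 0}"
  proof (rule matvs.span_minimal)
    show "matrix_unit ` A \<subseteq> {w :: 'a^'n^'n. \<forall>p. p \<notin> A \<longrightarrow> w $ fst p $ snd p = 0}"
      by (auto simp: matrix_unit_component)
    show "matvs.subspace {w :: 'a^'n^'n. \<forall>p. p \<notin> A \<longrightarrow> w $ fst p $ snd p = 0}"
      unfolding matvs.subspace_def by auto
  qed
  with assms show ?thesis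
    by force
qed

text \<open>The matrix units at \<open>Z\<close> and at one diagonal place \<open>(i0, i0)\<close> with nonzero weight span a
  complement.\<close>

lemma dim_pattern_weighted_trace_subspace:
  fixes wt :: "'n::finite \<Rightarrow> 'a::field" and Z :: "('n \<times> 'n) set"
  assumes off_diagonal: "\<And>i. (i, i) \<notin> Z" and "wt i0 \<noteq> 0"
  defines "W \<equiv> {w :: 'a^'n^'n. (\<forall>(i, j)\<in>Z. w $ i $ j = 0) \<and> (\<Sum>i\<in>UNIV. wt i * w $ i $ i) = 0}"
  shows "matvs.dim W + (card Z + 1) = CARD('n) * CARD('n)"
proof -
  define A where "A = insert (i0, i0) Z"
  define C where "C = matvs.span (matrix_unit ` A :: ('a^'n^'n) set)"
  have "matvs.subspace W"
    unfolding matvs.subspace_def W_def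
    by (auto simp: sum.distrib algebra_simps split_beta simp flip: sum_distrib_left)
  have "inj_on (matrix_unit :: _ \<Rightarrow> 'a^'n^'n) A"
    using inj_matrix_unit by (rule inj_on_subset) simp
  then have "matvs.dim C = card A"
    unfolding C_def by (simp add: matvs.dim_eq_card_independent[OF independent_matrix_units] card_image)
  also have "\<dots> = card Z + 1"
    unfolding A_def using off_diagonal by simp
  finally have dim_C: "matvs.dim C = card Z + 1" .
  have "W \<inter> C \<subseteq> {0}"
  proof
    fix w assume w: "w \<in> W \<inter> C"
    have outside: "w $ i $ j = 0" if "(i, j) \<notin> A" for i j
      using span_matrix_units_component[of w A] w that unfolding C_def by auto
    have "0 = (\<Sum>i\<in>UNIV. wt i * w $ i $ i)"
      using w unfolding W_def by auto
    also have "\<dots> = wt i0 * w $ i0 $ i0"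
      by (subst sum.remove[of _ i0]) (auto intro!: sum.neutral simp: outside A_def off_diagonal)
    finally have "w $ i0 $ i0 = 0"
      using \<open>wt i0 \<noteq> 0\<close> by simp
    then have "w $ i $ j = 0" for i j
      using outside w unfolding A_def W_def by (cases "(i, j) \<in> A") (auto simp: A_def)
    then show "w \<in> {0}"
      by (simp add: vec_eq_iff)
  qed
  then have dim_W_C: "matvs.dim (W \<inter> C) = 0"
    by simp
  have sum_W_C: "{x + y |x y. x \<in> W \<and> y \<in> C} = UNIV"
  proof (intro set_eqI iffI)
    fix M :: "'a^'n^'n"
    define t where "t = (\<Sum>i\<in>UNIV. wt i * M $ i $ i) / wt i0"
    define c where "c = (\<Sum>p\<in>Z. mscale (M $ fst p $ snd p) (matrix_unit p)) + mscale t (matrix_unit (i0, i0))"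
    have "c \<in> C"
      unfolding c_def C_def A_def
      by (intro matvs.span_add matvs.span_sum matvs.span_scale matvs.span_base) auto
    have c: "c $ i $ j = (if (i, j) \<in> Z then M $ i $ j else 0) + (if i = i0 \<and> j = i0 then t else 0)" for i j
      unfolding c_def using sum_matrix_units_component[of Z "\<lambda>p. M $ fst p $ snd p" i j]
      by (simp add: matrix_unit_component)
    have "wt i * (M - c) $ i $ i = wt i * M $ i $ i - (if i = i0 then wt i0 * t else 0)" for i
      using c[of i i] off_diagonal[of i] by (auto simp: algebra_simps)
    then have "(\<Sum>i\<in>UNIV. wt i * (M - c) $ i $ i) = (\<Sum>i\<in>UNIV. wt i * M $ i $ i) - wt i0 * t"
      by (simp add: sum_subtractf)
    also have "\<dots> = 0"
      using \<open>wt i0 \<noteq> 0\<close> by (simp add: t_def)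
    finally have "M - c \<in> W"
      unfolding W_def using c off_diagonal by auto
    then show "M \<in> {x + y |x y. x \<in> W \<and> y \<in> C}"
      using \<open>c \<in> C\<close> by (metis (mono_tags, lifting) diff_add_cancel mem_Collect_eq)
  qed simp
  have "matvs.dim {x + y |x y. x \<in> W \<and> y \<in> C} + matvs.dim (W \<inter> C) = matvs.dim W + matvs.dim C"
    by (rule matfd.dim_sums_Int[OF \<open>matvs.subspace W\<close>]) (simp add: C_def matvs.subspace_span)
  then show ?thesis
    unfolding sum_W_C dim_W_C dim_C dim_matrix_space by simp
qed

lemma dim_matrix_sandwich_invertible:
  fixes S T :: "'a::field^'n^'n"
  assumes "S ** T = mat 1" "T ** S = mat 1"
  shows "matvs.dim ((\<lambda>v. S ** v ** T) ` X) = matvs.dim X"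
proof (rule matpair.dim_image_eq[OF linear_matrix_sandwich])
  have "T ** (S ** v ** T) ** S = v" for v
    using assms by (simp add: matrix_mul_assoc flip: matrix_mul_assoc[of _ T S])
  then show "inj_on (\<lambda>v. S ** v ** T) (matvs.span X)"
    by (intro inj_onI) metis
qed

context idempotent_triple
begin

lemma conjugate_V_eq:
  fixes S T :: "'a^'n^'n"
  assumes ST: "S ** T = mat 1" "T ** S = mat 1"
    and E: "e1 = T ** diag_indicator I1 ** S" "e2 = T ** diag_indicator I2 ** S"
      "e3 = T ** diag_indicator I3 ** S"
    and I: "I1 \<inter> I2 = {}" "I1 \<inter> I3 = {}" "I2 \<inter> I3 = {}" "I1 \<union> I2 \<union> I3 = UNIV"
  shows "(\<lambda>v. S ** v ** T) ` V = {w. (\<forall>(i, j)\<in>I3 \<times> I1 \<union> I2 \<times> I3. w $ i $ j = 0)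
    \<and> (\<Sum>i\<in>UNIV. (if i \<in> I3 then \<sigma>2 else \<sigma>1) * w $ i $ i) = 0}" (is "_ = ?W")
proof -
  have ST': "X ** S ** T = X" "X ** T ** S = X" for X :: "'a^'n^'n"
    using ST by (simp_all flip: matrix_mul_assoc)
  have cancel: "T ** (S ** X ** T) ** S = X" "S ** (T ** X ** S) ** T = X" for X
    by (simp_all add: matrix_mul_assoc ST ST')
  have block: "e_i ** (T ** w ** S) ** e_j = T ** (diag_indicator I_i ** w ** diag_indicator I_j) ** S"
    if "e_i = T ** diag_indicator I_i ** S" "e_j = T ** diag_indicator I_j ** S" for e_i e_j I_i I_j w
    unfolding that by (simp add: matrix_mul_assoc ST')
  have block_eq_0: "T ** X ** S = 0 \<longleftrightarrow> X = 0" for X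
    using cancel(2)[of X] by auto
  define L :: "'a^'n^'n" where
    "L = mscale \<sigma>1 (diag_indicator I1 + diag_indicator I2) + mscale \<sigma>2 (diag_indicator I3)"
  have "Lambda = T ** L ** S"
    using E unfolding Lambda_def L_def
    by (simp add: matrix_add_ldistrib matrix_add_rdistrib matrix_mult_mscale_left matrix_mult_mscale_right)
  have L: "L $ i $ j = (if i = j then if i \<in> I3 then \<sigma>2 else \<sigma>1 else 0)" for i j
    using I unfolding L_def by (auto simp: diag_indicator_component)
  have trace_eq: "trace (Lambda ** (T ** w ** S)) = (\<Sum>i\<in>UNIV. (if i \<in> I3 then \<sigma>2 else \<sigma>1) * w $ i $ i)"
    for w
  proof -
    have "trace (Lambda ** (T ** w ** S)) = trace (T ** (L ** w ** S))"
      by (simp add: \<open>Lambda = T ** L ** S\<close> matrix_mul_assoc ST')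
    also have "\<dots> = trace (L ** w)"
      by (simp add: trace_mul_sym[of T] ST')
    also have "\<dots> = (\<Sum>i\<in>UNIV. (if i \<in> I3 then \<sigma>2 else \<sigma>1) * w $ i $ i)"
      by (subst trace_diagonal_mult) (simp_all add: L)
    finally show ?thesis .
  qed
  have key: "T ** w ** S \<in> V \<longleftrightarrow> w \<in> ?W" for w
    unfolding V_def mem_Collect_eq block[OF E(3) E(1)] block[OF E(2) E(3)] block_eq_0 trace_eq
      diag_indicator_sandwich_eq_0
    by (auto simp: ball_Un)
  show ?thesis
  proof (intro set_eqI iffI)
    fix w assume "w \<in> (\<lambda>v. S ** v ** T) ` V"
    then obtain v where "v \<in> V" "w = S ** v ** T"
      by blast
    then have "T ** w ** S = v"
      using cancel(1) by simp
    then show "w \<in> ?W"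
      using key[of w] \<open>v \<in> V\<close> by simp
  next
    fix w assume "w \<in> ?W"
    then have "T ** w ** S \<in> V"
      using key by blast
    then show "w \<in> (\<lambda>v. S ** v ** T) ` V"
      by (rule rev_image_eqI) (simp add: cancel)
  qed
qed

lemma codim_V: "mat_codim V = (rank e1 + rank e2) * rank e3 + 1"
proof -
  obtain S T :: "'a^'n^'n" and I1 I2 I3 where ST: "S ** T = mat 1" "T ** S = mat 1"
    and E: "e1 = T ** diag_indicator I1 ** S" "e2 = T ** diag_indicator I2 ** S"
      "e3 = T ** diag_indicator I3 ** S"
    and card: "card I1 = rank e1" "card I2 = rank e2" "card I3 = rank e3"
    and I: "I1 \<inter> I2 = {}" "I1 \<inter> I3 = {}" "I2 \<inter> I3 = {}" "I1 \<union> I2 \<union> I3 = UNIV"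
    by (rule simultaneous_diagonalization)
  define wt where "wt i = (if i \<in> I3 then \<sigma>2 else \<sigma>1)" for i
  obtain i0 where "wt i0 \<noteq> 0"
  proof (cases "I1 \<union> I2 = {}")
    case True
    then have "rank e3 = CARD('n)"
      using I card by (metis Un_empty_left)
    then have "\<sigma>2 \<noteq> 0"
      using sigma_gen[rule_format, of 0 1] by auto
    then show ?thesis
      using that[of undefined] True I(4) by (auto simp: wt_def)
  next
    case False
    then obtain i where "i \<in> I1 \<union> I2"
      by auto
    then have "card (I1 \<union> I2) \<ge> 1"
      by (auto simp: Suc_le_eq card_gt_0_iff)
    then have "rank e1 + rank e2 \<ge> 1"
      using card I card_Un_disjoint[of I1 I2] by simp
    then have "\<sigma>1 \<noteq> 0"
      using sigma_gen[rule_format, of 1 0] by auto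
    moreover have "i \<notin> I3"
      using \<open>i \<in> I1 \<union> I2\<close> I by auto
    ultimately show ?thesis
      using that[of i] by (simp add: wt_def)
  qed
  define Z where "Z = I3 \<times> I1 \<union> I2 \<times> I3"
  have "(\<lambda>v. S ** v ** T) ` V = {w. (\<forall>(i, j)\<in>Z. w $ i $ j = 0) \<and> (\<Sum>i\<in>UNIV. wt i * w $ i $ i) = 0}"
    unfolding wt_def Z_def by (rule conjugate_V_eq[OF ST E I])
  then have "matvs.dim V = matvs.dim {w. (\<forall>(i, j)\<in>Z. w $ i $ j = 0) \<and> (\<Sum>i\<in>UNIV. wt i * w $ i $ i) = 0}"
    using dim_matrix_sandwich_invertible[OF ST, of V] by simp
  moreover have "matvs.dim {w. (\<forall>(i, j)\<in>Z. w $ i $ j = 0) \<and> (\<Sum>i\<in>UNIV. wt i * w $ i $ i) = 0}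
      + (card Z + 1) = CARD('n) * CARD('n)"
  proof (rule dim_pattern_weighted_trace_subspace)
    show "(i, i) \<notin> Z" for i
      using I unfolding Z_def by auto
  qed (rule \<open>wt i0 \<noteq> 0\<close>)
  ultimately have "matvs.dim V + (card Z + 1) = CARD('n) * CARD('n)"
    by simp
  then have "mat_codim V = card Z + 1"
    unfolding mat_codim_def dim_matrix_space by (metis add_diff_cancel_left')
  also have "card Z = card I3 * card I1 + card I2 * card I3"
    using I unfolding Z_def by (subst card_Un_disjoint) (auto simp: card_cartesian_product)
  finally show ?thesis
    using card by (simp add: algebra_simps)
qed

end

theorem mainTheorem4:
  fixes e1 e2 e3 :: "'a::field^'n^'n"
    and \<sigma>1 \<sigma>2 :: 'a
    and n1 n2 n3 :: nat
  assumes idem: "e1 ** e1 = e1" "e2 ** e2 = e2" "e3 ** e3 = e3"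
    and orth: "e1 ** e2 = 0" "e2 ** e1 = 0" "e1 ** e3 = 0" "e3 ** e1 = 0"
              "e2 ** e3 = 0" "e3 ** e2 = 0"
    and sum_id: "e1 + e2 + e3 = mat 1"
    and ranks: "n1 = rank e1" "n2 = rank e2" "n3 = rank e3"
    and sigma_ne: "\<sigma>1 \<noteq> \<sigma>2"
    and sigma_gen: "\<forall>k1 k2 :: int. (k1, k2) \<noteq> (0, 0) \<and> 0 \<le> k1 \<and> k1 \<le> int (n1 + n2)
                      \<and> 0 \<le> k2 \<and> k2 \<le> int n3 \<longrightarrow> of_int k1 * \<sigma>1 + of_int k2 * \<sigma>2 \<noteq> 0"
  shows "let Z = {a. (e1 + e2) ** a ** e3 = 0 \<and> e3 ** a ** (e1 + e2) = 0};
             \<Lambda> = mscale \<sigma>1 (e1 + e2) + mscale \<sigma>2 e3;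
             \<Lambda>perp = {b. trace (\<Lambda> ** b) = 0};
             V = {z + x + y | z x y. z \<in> Z \<inter> \<Lambda>perp \<and> x \<in> {e1 ** m ** e3 | m. True}
                                   \<and> y \<in> {e3 ** m ** e2 | m. True}}
         in mathieu_subspace V \<and> mat_codim V = (n1 + n2) * n3 + 1"
proof -
  interpret idempotent_triple e1 e2 e3 \<sigma>1 \<sigma>2
    using idem orth sum_id sigma_gen unfolding ranks by unfold_locales auto
  show ?thesis
    unfolding Let_def sum_decomposition_eq_V[unfolded Lambda_def] ranks
    using mathieu_subspace_V codim_V by simp
qed

end
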